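(* Let $a=e_1$, let $\Sigma$ be symmetric positive definite with minimal eigenvalue $\gamma_{\min}$, and let $\widehat\Sigma$ be symmetric with $\delta:=\|\Sigma-\widehat\Sigma\|_{op}\le\gamma_{\min}/2$. Let $(\underline n^*,\underline\lambda^* )$ minimize $R(\underline n,\underline\lambda)$ and let $(\hat{\underline n},\hat{\underline\lambda})$ minimize $\widehat R(\underline n,\underline\lambda)$, both over feasible unbiased pairs. Then \[ R(\hat{\underline n},\hat{\underline\lambda})\le R(\underline n^*,\underline\lambda^* )+\frac{4\delta}{\gamma_{\min}}\,\sigma^2_{\mathrm{classical}}. \]
   Context: $\mathcal I$ is a collection of nonempty subsets of $\{1,\dots,k\}$; $P_I:\mathbb{R}^k\to\mathbb{R}^{|I|}$ the coordinate projection onto $I$; for a matrix $A$, $A_I=P_IAP_I^\top$. Costs $c_I\in\mathbb{R}^m_{\ge0}$, budget $B\in\mathbb{R}^m_{\ge0}$, vector inequalities componentwise; an allocation $\underline n\in\mathbb{Z}^{\mathcal I}_{\ge0}$ is feasible if $\sum_In_Ic_I\le B$; weights $\lambda_I\in\mathbb{R}^{|I|}$ are unbiased if $\sum_{I:n_I>0}P_I^\top\lambda_I=a$. Define $R(\underline n,\underline\lambda)=\sum_{I:n_I>0}\frac1{n_I}\lambda_I^\top\Sigma_I\lambda_I$ and $\widehat R(\underline n,\underline\lambda)=\sum_{I:n_I>0}\frac1{n_I}\lambda_I^\top\widehat\Sigma_I\lambda_I$. $\sigma^2_{\mathrm{classical}}=\Sigma_{11}/n^0_{I^0}$ for some $I^0\in\mathcal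 I$ with $1\in I^0$, where $n^0_{I^0}\ge1$ is the largest integer $n$ with $nc_{I^0}\le B$. *)

theory Defs
  imports Complex_Main
begin

text \<open>Coordinates are the naturals 1..k. A vector in R^k is a function
  nat => real (only its values on {1..k} matter); a k x k matrix is nat => nat => real
  (only values on {1..k} x {1..k} matter). For a subset I of {1..k}, a weight vector
  lambda_I in R^|I| is a function nat => real, only its values on I matter.\<close>

definition qform :: "nat set \<Rightarrow> (nat \<Rightarrow> nat \<Rightarrow> real) \<Rightarrow> (nat \<Rightarrow> real) \<Rightarrow> real" where
  "qform I A x = (\<Sum>i\<in>I. \<Sum>j\<in>I. x i * A i j * x j)"
  \<comment> \<open>lambda_I^T A_I lambda_I, A_I = P_I A P_I^T\<close>

definition active :: "nat set set \<Rightarrow> (nat set \<Rightarrow> nat) \<Rightarrow> nat set set" where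
  "active \<I> n = {I \<in> \<I>. 0 < n I}"

definition risk :: "nat set set \<Rightarrow> (nat \<Rightarrow> nat \<Rightarrow> real) \<Rightarrow> (nat set \<Rightarrow> nat)
    \<Rightarrow> (nat set \<Rightarrow> nat \<Rightarrow> real) \<Rightarrow> real" where
  "risk \<I> A n lam = (\<Sum>I\<in>active \<I> n. qform I A (lam I) / real (n I))"

definition feasible :: "nat set set \<Rightarrow> nat \<Rightarrow> (nat set \<Rightarrow> nat \<Rightarrow> real) \<Rightarrow> (nat \<Rightarrow> real)
    \<Rightarrow> (nat set \<Rightarrow> nat) \<Rightarrow> bool" where
  "feasible \<I> m c B n \<longleftrightarrow> (\<forall>r\<in>{1..m}. (\<Sum>I\<in>\<I>. real (n I) * c I r) \<le> B r)"

definition unbiased :: "nat \<Rightarrow> nat set set \<Rightarrow> (nat set \<Rightarrow> nat) \<Rightarrow> (nat set \<Rightarrow> nat \<Rightarrow> real)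
    \<Rightarrow> (nat \<Rightarrow> real) \<Rightarrow> bool" where
  "unbiased k \<I> n lam a \<longleftrightarrow>
     (\<forall>i\<in>{1..k}. (\<Sum>I\<in>active \<I> n. if i \<in> I then lam I i else 0) = a i)"
  \<comment> \<open>sum over I with n_I > 0 of P_I^T lambda_I equals a, coordinatewise\<close>

definition symmetric_mat :: "nat \<Rightarrow> (nat \<Rightarrow> nat \<Rightarrow> real) \<Rightarrow> bool" where
  "symmetric_mat k A \<longleftrightarrow> (\<forall>i\<in>{1..k}. \<forall>j\<in>{1..k}. A i j = A j i)"

definition posdef_mat :: "nat \<Rightarrow> (nat \<Rightarrow> nat \<Rightarrow> real) \<Rightarrow> bool" where
  "posdef_mat k A \<longleftrightarrow> (\<forall>x. (\<exists>i\<in>{1..k}. x i \<noteq> 0) \<longrightarrow> qform {1..k} A x > 0)"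

definition matvec :: "nat \<Rightarrow> (nat \<Rightarrow> nat \<Rightarrow> real) \<Rightarrow> (nat \<Rightarrow> real) \<Rightarrow> (nat \<Rightarrow> real)" where
  "matvec k A x = (\<lambda>i. \<Sum>j=1..k. A i j * x j)"

definition eigenvalue_mat :: "nat \<Rightarrow> (nat \<Rightarrow> nat \<Rightarrow> real) \<Rightarrow> real \<Rightarrow> bool" where
  "eigenvalue_mat k A \<mu> \<longleftrightarrow>
     (\<exists>x. (\<exists>i\<in>{1..k}. x i \<noteq> 0) \<and> (\<forall>i\<in>{1..k}. matvec k A x i = \<mu> * x i))"

definition min_eigenvalue :: "nat \<Rightarrow> (nat \<Rightarrow> nat \<Rightarrow> real) \<Rightarrow> real" where
  "min_eigenvalue k A = Min {\<mu>. eigenvalue_mat k A \<mu>}"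

definition vnorm :: "nat \<Rightarrow> (nat \<Rightarrow> real) \<Rightarrow> real" where
  "vnorm k x = sqrt (\<Sum>i=1..k. (x i)\<^sup>2)"

definition op_norm :: "nat \<Rightarrow> (nat \<Rightarrow> nat \<Rightarrow> real) \<Rightarrow> real" where
  "op_norm k A = Sup {vnorm k (matvec k A x) | x. vnorm k x = 1}"

end

(* Write gamma for the minimal eigenvalue of Sigma, delta for the operator norm of
   Sigma - hat Sigma, and (n', lambda') for the true optimum. Zero-extending lambda from a block I
   to R^k gives |lambda^T Sigma_I lambda - lambda^T hat Sigma_I lambda| <= delta |lambda|^2
   <= (delta / gamma) lambda^T Sigma_I lambda, so with t = delta / gamma <= 1/2 the true and the
   estimated risk of every allocation differ by at most the factor t. Hence
     (1 - t) R(hat n, hat lambda) <= hat R(hat n, hat lambda) <= hat R(n', lambda')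
       <= (1 + t) R(n', lambda'),
   and (1 + t) / (1 - t) <= 1 + 4 t. Finally R(n', lambda') <= sigma^2_classical, because
   spending the whole budget on I0 with weight e_1 is feasible and unbiased.
   The bound gamma |x|^2 <= x^T Sigma x is proved variationally: a minimiser of the quadratic
   form on the unit sphere is an eigenvector. *)

theory Submission
  imports Defs "HOL-Analysis.Analysis" "Jordan_Normal_Form.Char_Poly"
begin

lemma vnorm_nonneg: "0 \<le> vnorm k x"
  unfolding vnorm_def by (simp add: sum_nonneg)

lemma vnorm_power2: "(vnorm k x)\<^sup>2 = (\<Sum>i=1..k. (x i)\<^sup>2)"
  unfolding vnorm_def by (simp add: sum_nonneg)

lemma vnorm_eq_0_iff: "vnorm k x = 0 \<longleftrightarrow> (\<forall>i\<in>{1..k}. x i = 0)"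
  unfolding vnorm_def by (simp add: sum_nonneg_eq_0_iff)

lemma vnorm_cong: "(\<And>i. i \<in> {1..k} \<Longrightarrow> x i = y i) \<Longrightarrow> vnorm k x = vnorm k y"
  unfolding vnorm_def by simp

lemma vnorm_scale: "vnorm k (\<lambda>i. c * x i) = \<bar>c\<bar> * vnorm k x"
  unfolding vnorm_def by (simp add: power_mult_distrib sum_distrib_left[symmetric] real_sqrt_mult)

lemma vnorm_unit_vector:
  assumes "i \<in> {1..k}"
  shows "vnorm k (\<lambda>j. if j = i then 1 else 0) = 1"
proof -
  have "(\<Sum>j=1..k. (if j = i then 1 else 0 :: real)\<^sup>2) = (\<Sum>j=1..k. if j = i then 1 else 0)"
    by (rule sum.cong) auto
  then show ?thesis
    unfolding vnorm_def using assms by simp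
qed

lemma qform_cong: "(\<And>i. i \<in> K \<Longrightarrow> x i = y i) \<Longrightarrow> qform K A x = qform K A y"
  unfolding qform_def by simp

lemma qform_scale: "qform K A (\<lambda>i. c * x i) = c\<^sup>2 * qform K A x"
  unfolding qform_def by (simp add: sum_distrib_left power2_eq_square mult_ac)

lemma qform_eq_0_if_vnorm_eq_0: "vnorm k x = 0 \<Longrightarrow> qform {1..k} A x = 0"
  unfolding vnorm_eq_0_iff qform_def by simp

lemma qform_diff: "qform K A x - qform K A' x = qform K (\<lambda>i j. A i j - A' i j) x"
  unfolding qform_def by (simp add: sum_subtractf[symmetric] algebra_simps)

lemma qform_restrict:
  assumes "K \<subseteq> {1..k}"
  shows "qform K A x = qform {1..k} A (\<lambda>i. if i \<in> K then x i else 0)"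
proof -
  let ?z = "\<lambda>i. if i \<in> K then x i else 0"
  have "qform {1..k} A ?z = (\<Sum>i\<in>K. \<Sum>j\<in>{1..k}. ?z i * A i j * ?z j)"
    unfolding qform_def using assms by (intro sum.mono_neutral_right) auto
  also have "\<dots> = (\<Sum>i\<in>K. \<Sum>j\<in>K. ?z i * A i j * ?z j)"
    using assms by (intro sum.cong refl sum.mono_neutral_right) auto
  also have "\<dots> = qform K A x"
    unfolding qform_def by simp
  finally show ?thesis by simp
qed

lemma qform_unit_vector:
  assumes "finite K" "i \<in> K"
  shows "qform K A (\<lambda>j. if j = i then 1 else 0) = A i i"
proof -
  have "qform K A (\<lambda>j. if j = i then 1 else 0)
      = (\<Sum>i'\<in>K. if i' = i then (\<Sum>j\<in>K. if j = i then A i j else 0) else 0)"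
    unfolding qform_def by (intro sum.cong refl) (auto intro: sum.cong)
  then show ?thesis
    using assms by simp
qed

lemma matvec_scale: "matvec k A (\<lambda>i. c * x i) = (\<lambda>i. c * matvec k A x i)"
  unfolding matvec_def by (simp add: sum_distrib_left mult_ac)

lemma qform_eq_sum_matvec: "qform {1..k} A x = (\<Sum>i=1..k. x i * matvec k A x i)"
  unfolding qform_def matvec_def by (simp add: sum_distrib_left mult_ac)

lemma qform_add_scaled:
  assumes sym: "symmetric_mat k A"
  shows "qform {1..k} A (\<lambda>i. x i + t * y i)
    = qform {1..k} A x + 2 * t * (\<Sum>i=1..k. y i * matvec k A x i) + t\<^sup>2 * qform {1..k} A y"
proof -
  have yAx: "(\<Sum>i=1..k. \<Sum>j=1..k. y i * A i j * x j) = (\<Sum>i=1..k. y i * matvec k A x i)"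
    unfolding matvec_def by (simp add: sum_distrib_left mult.assoc)
  have "(\<Sum>i=1..k. \<Sum>j=1..k. x i * A i j * y j) = (\<Sum>j=1..k. \<Sum>i=1..k. x i * A i j * y j)"
    by (rule sum.swap)
  also have "\<dots> = (\<Sum>j=1..k. \<Sum>i=1..k. y j * A j i * x i)"
    using sym unfolding symmetric_mat_def by (intro sum.cong refl) (simp add: mult_ac)
  finally have xAy: "(\<Sum>i=1..k. \<Sum>j=1..k. x i * A i j * y j) = (\<Sum>i=1..k. y i * matvec k A x i)"
    using yAx by simp
  have "qform {1..k} A (\<lambda>i. x i + t * y i) = (\<Sum>i=1..k. \<Sum>j=1..k. x i * A i j * x j
      + t * (x i * A i j * y j) + t * (y i * A i j * x j) + t\<^sup>2 * (y i * A i j * y j))"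
    unfolding qform_def by (intro sum.cong refl) (simp add: algebra_simps power2_eq_square)
  also have "\<dots> = qform {1..k} A x + t * (\<Sum>i=1..k. \<Sum>j=1..k. x i * A i j * y j)
      + t * (\<Sum>i=1..k. \<Sum>j=1..k. y i * A i j * x j) + t\<^sup>2 * qform {1..k} A y"
    unfolding qform_def by (simp add: sum.distrib sum_distrib_left)
  finally show ?thesis
    unfolding xAy yAx by simp
qed

lemma linear_coeff_eq_0_if_quadratic_nonneg:
  fixes b c :: real
  assumes "\<And>t. 0 \<le> t * b + t\<^sup>2 * c"
  shows "b = 0"
proof (rule ccontr)
  assume b: "b \<noteq> 0"
  define d where "d = \<bar>c\<bar> + 1"
  have d: "0 < d" "c \<le> d - 1"
    unfolding d_def by auto
  define t where "t = - b / d"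
  have "0 \<le> t * b + t\<^sup>2 * c"
    by (rule assms)
  also have "\<dots> \<le> t * b + t\<^sup>2 * (d - 1)"
    using d by (intro add_left_mono mult_left_mono) auto
  also have "\<dots> = - b\<^sup>2 / d\<^sup>2"
    unfolding t_def using d by (simp add: field_simps power2_eq_square)
  also have "\<dots> < 0"
    using b d by simp
  finally show False by simp
qed

lemma psd_qform_eq_0_imp_matvec_eq_0:
  assumes sym: "symmetric_mat k M" and psd: "\<And>y. 0 \<le> qform {1..k} M y"
    and zero: "qform {1..k} M x = 0" and i: "i \<in> {1..k}"
  shows "matvec k M x i = 0"
proof -
  define v where "v = matvec k M x"
  have vv: "(\<Sum>i=1..k. v i * matvec k M x i) = (vnorm k v)\<^sup>2"
    unfolding vnorm_power2 v_def by (simp add: power2_eq_square)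
  have "0 \<le> t * (2 * (vnorm k v)\<^sup>2) + t\<^sup>2 * qform {1..k} M v" for t
    using psd[of "\<lambda>i. x i + t * v i"] unfolding qform_add_scaled[OF sym] zero vv
    by (simp add: algebra_simps)
  then have "2 * (vnorm k v)\<^sup>2 = 0"
    by (rule linear_coeff_eq_0_if_quadratic_nonneg)
  then show ?thesis
    using i vnorm_eq_0_iff[of k v] unfolding v_def by simp
qed

lemma compact_unit_sphere: "compact {x::nat\<Rightarrow>real. (\<forall>i\<in>-{1..k}. x i = 0) \<and> vnorm k x = 1}"
  (is "compact ?U")
proof -
  define K :: "(nat \<Rightarrow> real) set"
    where "K = PiE UNIV (\<lambda>i. if i \<in> {1..k} then {-1..1} else {0})"
  have "compactin (product_topology (\<lambda>_. euclidean) UNIV) K"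
    unfolding K_def by (subst compactin_PiE) auto
  then have "compact K"
    by (simp add: euclidean_product_topology)
  moreover have "closed ?U"
  proof -
    have "?U = (\<Inter>i\<in>-{1..k}. {x. x i = 0}) \<inter> {x. vnorm k x = 1}"
      by auto
    moreover have "closed \<dots>"
      unfolding vnorm_def
      by (intro closed_Int closed_INT ballI closed_Collect_eq continuous_intros
          continuous_on_product_coordinates)
    ultimately show ?thesis by simp
  qed
  moreover have "?U \<subseteq> K"
  proof
    fix x assume x: "x \<in> ?U"
    have "\<bar>x i\<bar> \<le> 1" if "i \<in> {1..k}" for i
    proof -
      have "(x i)\<^sup>2 \<le> (\<Sum>i=1..k. (x i)\<^sup>2)"
        using that by (intro member_le_sum) auto
      then show ?thesis
        using x vnorm_power2[of k x] by (simp add: abs_square_le_1)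
    qed
    then show "x \<in> K"
      using x unfolding K_def by (auto simp: abs_le_iff)
  qed
  ultimately show ?thesis
    using compact_Int_closed[of K ?U] by (simp add: Int_absorb1)
qed

lemma rayleigh_quotient_attains_min:
  assumes "1 \<le> k"
  obtains x0 where "vnorm k x0 = 1"
    and "\<And>x. qform {1..k} A x0 * (vnorm k x)\<^sup>2 \<le> qform {1..k} A x"
proof -
  define U where "U = {x::nat\<Rightarrow>real. (\<forall>i\<in>-{1..k}. x i = 0) \<and> vnorm k x = 1}"
  have "(\<lambda>j. if j = 1 then 1 else 0) \<in> U"
    unfolding U_def using assms vnorm_unit_vector[of 1 k] by auto
  then have nonempty: "U \<noteq> {}" by blast
  have continuous: "continuous_on U (qform {1..k} A)"
    unfolding qform_def
    by (intro continuous_intros continuous_on_subset[OF continuous_on_product_coordinates] subset_UNIV)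
  have "compact U"
    unfolding U_def by (rule compact_unit_sphere)
  then obtain x0 where x0: "x0 \<in> U" and min: "\<And>y. y \<in> U \<Longrightarrow> qform {1..k} A x0 \<le> qform {1..k} A y"
    using continuous_attains_inf[OF _ nonempty continuous] by blast
  have "qform {1..k} A x0 * (vnorm k x)\<^sup>2 \<le> qform {1..k} A x" for x
  proof (cases "vnorm k x = 0")
    case True
    then show ?thesis
      using qform_eq_0_if_vnorm_eq_0[OF True] by simp
  next
    case False
    define r where "r = vnorm k x"
    have r: "0 < r"
      using False vnorm_nonneg[of k x] unfolding r_def by simp
    define y where "y i = (if i \<in> {1..k} then x i / r else 0)" for i
    have y_eq: "y i = (1 / r) * x i" if "i \<in> {1..k}" for i
      using that unfolding y_def by simp
    have "vnorm k y = vnorm k (\<lambda>i. (1 / r) * x i)"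
      using y_eq by (rule vnorm_cong)
    also have "\<dots> = 1"
      unfolding vnorm_scale using r by (simp add: r_def)
    finally have "qform {1..k} A x0 \<le> qform {1..k} A y"
      by (intro min) (auto simp: U_def y_def)
    also have "qform {1..k} A y = qform {1..k} A (\<lambda>i. (1 / r) * x i)"
      using y_eq by (rule qform_cong)
    also have "\<dots> = qform {1..k} A x / r\<^sup>2"
      unfolding qform_scale by (simp add: power_divide)
    finally show ?thesis
      using r unfolding r_def by (simp add: field_simps)
  qed
  then show ?thesis
    using that x0 unfolding U_def by blast
qed

lemma rayleigh_minimum_is_eigenvalue:
  assumes k: "1 \<le> k" and sym: "symmetric_mat k S"
  obtains g where "eigenvalue_mat k S g" and "\<And>x. g * (vnorm k x)\<^sup>2 \<le> qform {1..k} S x"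
proof -
  obtain x0 where x0: "vnorm k x0 = 1"
    and min: "\<And>x. qform {1..k} S x0 * (vnorm k x)\<^sup>2 \<le> qform {1..k} S x"
    using rayleigh_quotient_attains_min[OF k] by blast
  define g where "g = qform {1..k} S x0"
  \<comment> \<open>S - g Id is positive semidefinite and vanishes on x0, hence annihilates x0\<close>
  define M where "M i j = S i j - g * (if i = j then 1 else 0)" for i j
  have qform_M: "qform {1..k} M x = qform {1..k} S x - g * (vnorm k x)\<^sup>2" for x
  proof -
    have "qform {1..k} M x = (\<Sum>i=1..k. \<Sum>j=1..k. x i * S i j * x j - (if i = j then g * (x i)\<^sup>2 else 0))"
      unfolding qform_def M_def by (intro sum.cong refl) (auto simp: algebra_simps power2_eq_square)
    then show ?thesis
      unfolding vnorm_power2 qform_def by (simp add: sum_subtractf sum_distrib_left)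
  qed
  have matvec_M: "matvec k M x i = matvec k S x i - g * x i" if "i \<in> {1..k}" for x i
  proof -
    have "matvec k M x i = (\<Sum>j=1..k. S i j * x j - (if i = j then g * x j else 0))"
      unfolding matvec_def M_def by (intro sum.cong refl) (auto simp: algebra_simps)
    then show ?thesis
      using that unfolding matvec_def by (simp add: sum_subtractf)
  qed
  have sym_M: "symmetric_mat k M"
    using sym unfolding symmetric_mat_def M_def by auto
  have psd_M: "0 \<le> qform {1..k} M y" for y
    using min[of y] unfolding qform_M g_def by simp
  have "qform {1..k} M x0 = 0"
    unfolding qform_M g_def x0 by simp
  then have "matvec k M x0 i = 0" if "i \<in> {1..k}" for i
    using that by (rule psd_qform_eq_0_imp_matvec_eq_0[OF sym_M psd_M])
  then have "matvec k S x0 i = g * x0 i" if "i \<in> {1..k}" for i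
    using matvec_M[OF that] that by fastforce
  moreover have "\<exists>i\<in>{1..k}. x0 i \<noteq> 0"
    using x0 vnorm_eq_0_iff[of k x0] by auto
  ultimately have "eigenvalue_mat k S g"
    unfolding eigenvalue_mat_def by blast
  then show ?thesis
    using that min unfolding g_def by blast
qed

lemma finite_eigenvalues: "finite {\<mu>. eigenvalue_mat k A \<mu>}"
proof -
  define M :: "real mat" where "M = mat k k (\<lambda>(i, j). A (Suc i) (Suc j))"
  have M: "M \<in> carrier_mat k k"
    unfolding M_def by simp
  have "{\<mu>. eigenvalue_mat k A \<mu>} \<subseteq> {\<mu>. poly (char_poly M) \<mu> = 0}"
  proof
    fix \<mu> assume "\<mu> \<in> {\<mu>. eigenvalue_mat k A \<mu>}"
    then obtain x where x_nz: "\<exists>i\<in>{1..k}. x i \<noteq> 0"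
      and x_eig: "\<forall>i\<in>{1..k}. matvec k A x i = \<mu> * x i"
      unfolding eigenvalue_mat_def by auto
    define v where "v = vec k (\<lambda>i. x (Suc i))"
    have "eigenvector M v \<mu>"
      unfolding eigenvector_def
    proof (intro conjI)
      show "v \<in> carrier_vec (dim_row M)"
        using M unfolding v_def by simp
      from x_nz obtain i where i: "i \<in> {1..k}" "x i \<noteq> 0" by auto
      then have "v $ (i - 1) \<noteq> 0" "i - 1 < k"
        unfolding v_def by auto
      then show "v \<noteq> 0\<^sub>v (dim_row M)"
        using M by auto
      show "M *\<^sub>v v = \<mu> \<cdot>\<^sub>v v"
      proof (rule eq_vecI)
        fix i assume "i < dim_vec (\<mu> \<cdot>\<^sub>v v)"
        then have i: "i < k"
          unfolding v_def by simp
        have "(M *\<^sub>v v) $ i = (\<Sum>j<k. A (Suc i) (Suc j) * x (Suc j))"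
          using i M unfolding v_def M_def by (simp add: scalar_prod_def lessThan_atLeast0)
        also have "\<dots> = matvec k A x (Suc i)"
          unfolding matvec_def by (simp add: sum.atLeast1_atMost_eq)
        also have "\<dots> = (\<mu> \<cdot>\<^sub>v v) $ i"
          using x_eig i unfolding v_def by simp
        finally show "(M *\<^sub>v v) $ i = (\<mu> \<cdot>\<^sub>v v) $ i" .
      qed (use M in \<open>simp add: v_def\<close>)
    qed
    then show "\<mu> \<in> {\<mu>. poly (char_poly M) \<mu> = 0}"
      using eigenvalue_root_char_poly[OF M] unfolding eigenvalue_def by blast
  qed
  moreover have "finite {\<mu>. poly (char_poly M) \<mu> = 0}"
    using degree_monic_char_poly[OF M] by (intro poly_roots_finite) auto
  ultimately show ?thesis
    by (rule finite_subset)
qed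

lemma eigenvalue_pos_if_posdef:
  assumes pd: "posdef_mat k S" and eig: "eigenvalue_mat k S \<mu>"
  shows "0 < \<mu>"
proof -
  obtain x where x_nz: "\<exists>i\<in>{1..k}. x i \<noteq> 0" and x_eig: "\<forall>i\<in>{1..k}. matvec k S x i = \<mu> * x i"
    using eig unfolding eigenvalue_mat_def by blast
  have "qform {1..k} S x = \<mu> * (vnorm k x)\<^sup>2"
    unfolding qform_eq_sum_matvec vnorm_power2 using x_eig
    by (simp add: sum_distrib_left power2_eq_square mult_ac)
  moreover have "0 < qform {1..k} S x"
    using pd x_nz unfolding posdef_mat_def by blast
  moreover have "0 < vnorm k x"
    using x_nz vnorm_nonneg[of k x] vnorm_eq_0_iff[of k x] by auto
  ultimately show ?thesis
    by (simp add: zero_less_mult_iff)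
qed

lemma min_eigenvalue_pos:
  assumes "1 \<le> k" "symmetric_mat k S" "posdef_mat k S"
  shows "0 < min_eigenvalue k S"
proof -
  obtain g where "eigenvalue_mat k S g"
    using rayleigh_minimum_is_eigenvalue[OF assms(1,2)] .
  then have "min_eigenvalue k S \<in> {\<mu>. eigenvalue_mat k S \<mu>}"
    unfolding min_eigenvalue_def by (intro Min_in finite_eigenvalues) auto
  then show ?thesis
    using eigenvalue_pos_if_posdef[OF assms(3)] by blast
qed

lemma min_eigenvalue_le_rayleigh:
  assumes "1 \<le> k" "symmetric_mat k S"
  shows "min_eigenvalue k S * (vnorm k x)\<^sup>2 \<le> qform {1..k} S x"
proof -
  obtain g where g: "eigenvalue_mat k S g" and bound: "g * (vnorm k x)\<^sup>2 \<le> qform {1..k} S x"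
    using rayleigh_minimum_is_eigenvalue[OF assms] by metis
  have "min_eigenvalue k S \<le> g"
    unfolding min_eigenvalue_def using g by (intro Min_le finite_eigenvalues) auto
  then have "min_eigenvalue k S * (vnorm k x)\<^sup>2 \<le> g * (vnorm k x)\<^sup>2"
    by (intro mult_right_mono) auto
  with bound show ?thesis by linarith
qed

lemma posdef_qform_nonneg:
  assumes pd: "posdef_mat k S" and K: "K \<subseteq> {1..k}"
  shows "0 \<le> qform K S x"
proof -
  let ?z = "\<lambda>i. if i \<in> K then x i else 0"
  have "0 \<le> qform {1..k} S ?z"
  proof (cases "\<forall>i\<in>{1..k}. ?z i = 0")
    case True
    then have "vnorm k ?z = 0"
      unfolding vnorm_eq_0_iff .
    then show ?thesis
      using qform_eq_0_if_vnorm_eq_0 by (metis order_refl)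
  next
    case False
    then show ?thesis
      using pd unfolding posdef_mat_def by (simp add: less_imp_le)
  qed
  then show ?thesis
    using qform_restrict[OF K] by simp
qed

lemma bdd_above_op_norm_set: "bdd_above {vnorm k (matvec k D x) | x. vnorm k x = 1}"
proof (rule bdd_aboveI[where M = "sqrt (\<Sum>i=1..k. (\<Sum>j=1..k. \<bar>D i j\<bar>)\<^sup>2)"])
  fix v assume "v \<in> {vnorm k (matvec k D x) | x. vnorm k x = 1}"
  then obtain x where x: "vnorm k x = 1" and v: "v = vnorm k (matvec k D x)"
    by blast
  have x_le_1: "\<bar>x j\<bar> \<le> 1" if "j \<in> {1..k}" for j
  proof -
    have "(x j)\<^sup>2 \<le> (\<Sum>i=1..k. (x i)\<^sup>2)"
      using that by (intro member_le_sum) auto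
    then show ?thesis
      using x vnorm_power2[of k x] by (simp add: abs_square_le_1)
  qed
  have "(matvec k D x i)\<^sup>2 \<le> (\<Sum>j=1..k. \<bar>D i j\<bar>)\<^sup>2" for i
  proof -
    have "\<bar>matvec k D x i\<bar> \<le> (\<Sum>j=1..k. \<bar>D i j\<bar> * \<bar>x j\<bar>)"
      unfolding matvec_def by (rule order_trans[OF sum_abs]) (simp add: abs_mult)
    also have "\<dots> \<le> (\<Sum>j=1..k. \<bar>D i j\<bar>)"
      using x_le_1 by (intro sum_mono) (simp add: mult_left_le)
    finally have "\<bar>matvec k D x i\<bar>\<^sup>2 \<le> (\<Sum>j=1..k. \<bar>D i j\<bar>)\<^sup>2"
      by (intro power_mono) auto
    then show ?thesis
      by simp
  qed
  then show "v \<le> sqrt (\<Sum>i=1..k. (\<Sum>j=1..k. \<bar>D i j\<bar>)\<^sup>2)"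
    unfolding v vnorm_def by (intro real_sqrt_le_mono sum_mono)
qed

lemma vnorm_matvec_le_op_norm: "vnorm k (matvec k D x) \<le> op_norm k D * vnorm k x"
proof (cases "vnorm k x = 0")
  case True
  then have "vnorm k (matvec k D x) = 0"
    unfolding vnorm_eq_0_iff matvec_def by simp
  with True show ?thesis by simp
next
  case False
  define r where "r = vnorm k x"
  have r: "0 < r"
    using False vnorm_nonneg[of k x] unfolding r_def by simp
  have "vnorm k (\<lambda>i. (1 / r) * x i) = 1"
    using r unfolding vnorm_scale r_def by simp
  then have "vnorm k (matvec k D (\<lambda>i. (1 / r) * x i)) \<le> op_norm k D"
    unfolding op_norm_def by (intro cSup_upper bdd_above_op_norm_set) blast
  then have "vnorm k (matvec k D x) / r \<le> op_norm k D"
    using r unfolding matvec_scale vnorm_scale by simp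
  then show ?thesis
    using r unfolding r_def by (simp add: field_simps)
qed

lemma op_norm_nonneg:
  assumes "1 \<le> k"
  shows "0 \<le> op_norm k D"
proof -
  let ?e = "\<lambda>j. if j = 1 then 1 else 0"
  have "0 \<le> vnorm k (matvec k D ?e)"
    by (rule vnorm_nonneg)
  also have "\<dots> \<le> op_norm k D * vnorm k ?e"
    by (rule vnorm_matvec_le_op_norm)
  also have "vnorm k ?e = 1"
    using assms by (intro vnorm_unit_vector) auto
  finally show ?thesis
    by simp
qed

lemma abs_qform_le_op_norm: "\<bar>qform {1..k} D x\<bar> \<le> op_norm k D * (vnorm k x)\<^sup>2"
proof -
  have "\<bar>qform {1..k} D x\<bar> \<le> (\<Sum>i=1..k. \<bar>x i\<bar> * \<bar>matvec k D x i\<bar>)"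
    unfolding qform_eq_sum_matvec by (rule order_trans[OF sum_abs]) (simp add: abs_mult)
  also have "\<dots> \<le> vnorm k x * vnorm k (matvec k D x)"
    using L2_set_mult_ineq unfolding vnorm_def L2_set_def by simp
  also have "\<dots> \<le> vnorm k x * (op_norm k D * vnorm k x)"
    by (intro mult_left_mono vnorm_matvec_le_op_norm vnorm_nonneg)
  finally show ?thesis
    by (simp add: power2_eq_square mult_ac)
qed

lemma abs_qform_diff_le:
  assumes K: "K \<subseteq> {1..k}" and k: "1 \<le> k" and sym: "symmetric_mat k S" and pd: "posdef_mat k S"
  shows "\<bar>qform K S x - qform K S' x\<bar>
    \<le> op_norm k (\<lambda>i j. S i j - S' i j) / min_eigenvalue k S * qform K S x"
proof -
  define z where "z i = (if i \<in> K then x i else 0)" for i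
  define \<delta> where "\<delta> = op_norm k (\<lambda>i j. S i j - S' i j)"
  define \<gamma> where "\<gamma> = min_eigenvalue k S"
  have \<gamma>: "0 < \<gamma>"
    unfolding \<gamma>_def by (rule min_eigenvalue_pos[OF k sym pd])
  have "\<bar>qform K S x - qform K S' x\<bar> = \<bar>qform {1..k} (\<lambda>i j. S i j - S' i j) z\<bar>"
    unfolding qform_diff qform_restrict[OF K] z_def ..
  also have "\<dots> \<le> \<delta> * (vnorm k z)\<^sup>2"
    unfolding \<delta>_def by (rule abs_qform_le_op_norm)
  also have "\<dots> = \<delta> / \<gamma> * (\<gamma> * (vnorm k z)\<^sup>2)"
    using \<gamma> by simp
  also have "\<dots> \<le> \<delta> / \<gamma> * qform {1..k} S z"
    unfolding \<gamma>_def \<delta>_def using \<gamma>[unfolded \<gamma>_def] op_norm_nonneg[OF k]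
    by (intro mult_left_mono min_eigenvalue_le_rayleigh[OF k sym]) auto
  also have "\<dots> = \<delta> / \<gamma> * qform K S x"
    unfolding qform_restrict[OF K] z_def ..
  finally show ?thesis
    unfolding \<delta>_def \<gamma>_def .
qed

lemma abs_risk_diff_le:
  assumes "\<And>I y. I \<in> \<I> \<Longrightarrow> \<bar>qform I A y - qform I A' y\<bar> \<le> t * qform I A y"
  shows "\<bar>risk \<I> A n lam - risk \<I> A' n lam\<bar> \<le> t * risk \<I> A n lam"
proof -
  have "\<bar>risk \<I> A n lam - risk \<I> A' n lam\<bar>
      = \<bar>\<Sum>I\<in>active \<I> n. (qform I A (lam I) - qform I A' (lam I)) / real (n I)\<bar>"
    unfolding risk_def by (simp add: sum_subtractf diff_divide_distrib)
  also have "\<dots> \<le> (\<Sum>I\<in>active \<I> n. \<bar>qform I A (lam I) - qform I A' (lam I)\<bar> / real (n I))"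
    by (rule order_trans[OF sum_abs]) simp
  also have "\<dots> \<le> (\<Sum>I\<in>active \<I> n. t * qform I A (lam I) / real (n I))"
    using assms by (intro sum_mono divide_right_mono) (auto simp: active_def)
  also have "\<dots> = t * risk \<I> A n lam"
    unfolding risk_def by (simp add: sum_distrib_left)
  finally show ?thesis .
qed

lemma risk_nonneg:
  assumes "\<And>I y. I \<in> \<I> \<Longrightarrow> 0 \<le> qform I A y"
  shows "0 \<le> risk \<I> A n lam"
  unfolding risk_def using assms by (intro sum_nonneg divide_nonneg_nonneg) (auto simp: active_def)

lemma active_single_block:
  assumes "I0 \<in> \<I>" "0 < n0"
  shows "active \<I> (\<lambda>I. if I = I0 then n0 else 0) = {I0}"
  unfolding active_def using assms by auto

lemma feasible_single_block:
  assumes "finite \<I>" "I0 \<in> \<I>" "\<forall>r\<in>{1..m}. real n0 * c I0 r \<le> B r"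
  shows "feasible \<I> m c B (\<lambda>I. if I = I0 then n0 else 0)"
proof -
  have "(\<Sum>I\<in>\<I>. real (if I = I0 then n0 else 0) * c I r) = real n0 * c I0 r" for r
  proof -
    have "(\<Sum>I\<in>\<I>. real (if I = I0 then n0 else 0) * c I r)
        = (\<Sum>I\<in>\<I>. if I = I0 then real n0 * c I r else 0)"
      by (intro sum.cong) auto
    then show ?thesis
      using assms by simp
  qed
  then show ?thesis
    unfolding feasible_def using assms by simp
qed

lemma unbiased_single_block:
  assumes "I0 \<in> \<I>" "0 < n0" "\<forall>i\<in>{1..k}. i \<notin> I0 \<longrightarrow> a i = 0"
  shows "unbiased k \<I> (\<lambda>I. if I = I0 then n0 else 0) (\<lambda>_. a) a"
  unfolding unbiased_def active_single_block[OF assms(1,2)] using assms(3) by auto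

lemma risk_single_block:
  assumes "I0 \<in> \<I>" "0 < n0"
  shows "risk \<I> A (\<lambda>I. if I = I0 then n0 else 0) lam = qform I0 A (lam I0) / real n0"
  unfolding risk_def active_single_block[OF assms] by simp

lemma min_risk_le_single_block:
  assumes fin: "finite \<I>" and I0: "I0 \<in> \<I>" "finite I0" "i \<in> I0" and n0: "0 < n0"
    and fits: "\<forall>r\<in>{1..m}. real n0 * c I0 r \<le> B r"
    and min: "\<forall>n lam. feasible \<I> m c B n \<and> unbiased k \<I> n lam (\<lambda>j. if j = i then 1 else 0)
                \<longrightarrow> R \<le> risk \<I> A n lam"
  shows "R \<le> A i i / real n0"
proof -
  let ?e = "\<lambda>j. if j = i then 1 else 0 :: real"
  have "feasible \<I> m c B (\<lambda>I. if I = I0 then n0 else 0)"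
    using fin I0(1) fits by (rule feasible_single_block)
  moreover have "unbiased k \<I> (\<lambda>I. if I = I0 then n0 else 0) (\<lambda>_. ?e) ?e"
    using I0 n0 by (intro unbiased_single_block) auto
  ultimately have "R \<le> risk \<I> A (\<lambda>I. if I = I0 then n0 else 0) (\<lambda>_. ?e)"
    using min by blast
  also have "\<dots> = qform I0 A ?e / real n0"
    using I0(1) n0 by (rule risk_single_block)
  also have "qform I0 A ?e = A i i"
    using I0(2,3) by (rule qform_unit_vector)
  finally show ?thesis .
qed

lemma le_add_relative_error:
  fixes t r r' s s' :: real
  assumes r: "\<bar>r - r'\<bar> \<le> t * r" and s: "\<bar>s - s'\<bar> \<le> t * s" and r's': "r' \<le> s'"
    and t: "0 \<le> t" "t \<le> 1/2" and s_nonneg: "0 \<le> s"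
  shows "r \<le> s + 4 * t * s"
proof -
  have "(1 - t) * r \<le> r'"
    using r by (simp add: algebra_simps abs_le_iff)
  also have "\<dots> \<le> s'"
    by (rule r's')
  also have "\<dots> \<le> (1 + t) * s"
    using s by (simp add: algebra_simps abs_le_iff)
  also have "\<dots> \<le> (1 - t) * ((1 + 4 * t) * s)"
  proof -
    have "0 \<le> t * (2 - 4 * t) * s"
      using t s_nonneg by (intro mult_nonneg_nonneg) auto
    then show ?thesis
      by (simp add: algebra_simps)
  qed
  finally have "r \<le> (1 + 4 * t) * s"
    using t by (subst (asm) mult_le_cancel_left_pos) auto
  then show ?thesis
    by (simp add: distrib_right)
qed

theorem theoremE3:
  fixes k m :: nat
    and \<I> :: "nat set set"
    and c :: "nat set \<Rightarrow> nat \<Rightarrow> real" and B :: "nat \<Rightarrow> real"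
    and S Sh :: "nat \<Rightarrow> nat \<Rightarrow> real"
    and a :: "nat \<Rightarrow> real"
    and nstar nhat :: "nat set \<Rightarrow> nat"
    and lamstar lamhat :: "nat set \<Rightarrow> nat \<Rightarrow> real"
    and I0 :: "nat set" and n0 :: nat
  assumes I_sub: "\<forall>I\<in>\<I>. I \<noteq> {} \<and> I \<subseteq> {1..k}"
    and c_nonneg: "\<forall>I\<in>\<I>. \<forall>r\<in>{1..m}. 0 \<le> c I r"
    and B_nonneg: "\<forall>r\<in>{1..m}. 0 \<le> B r"
    and a_def: "a = (\<lambda>i. if i = 1 then 1 else 0)"
    and S_sym: "symmetric_mat k S" and S_pd: "posdef_mat k S"
    and Sh_sym: "symmetric_mat k Sh"
    and delta_le: "op_norm k (\<lambda>i j. S i j - Sh i j) \<le> min_eigenvalue k S / 2"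
    and star_feas: "feasible \<I> m c B nstar" and star_unb: "unbiased k \<I> nstar lamstar a"
    and star_min: "\<forall>n lam. feasible \<I> m c B n \<and> unbiased k \<I> n lam a
                     \<longrightarrow> risk \<I> S nstar lamstar \<le> risk \<I> S n lam"
    and hat_feas: "feasible \<I> m c B nhat" and hat_unb: "unbiased k \<I> nhat lamhat a"
    and hat_min: "\<forall>n lam. feasible \<I> m c B n \<and> unbiased k \<I> n lam a
                     \<longrightarrow> risk \<I> Sh nhat lamhat \<le> risk \<I> Sh n lam"
    and I0_in: "I0 \<in> \<I>" and one_in_I0: "1 \<in> I0"
    and n0_ge: "1 \<le> n0"
    and n0_fits: "\<forall>r\<in>{1..m}. real n0 * c I0 r \<le> B r"
    and n0_largest: "\<forall>n::nat. (\<forall>r\<in>{1..m}. real n * c I0 r \<le> B r) \<longrightarrow> n \<le> n0"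
  shows "risk \<I> S nhat lamhat
           \<le> risk \<I> S nstar lamstar
              + 4 * op_norm k (\<lambda>i j. S i j - Sh i j) / min_eigenvalue k S * (S 1 1 / real n0)"
proof -
  have k: "1 \<le> k"
    using I_sub I0_in one_in_I0 by fastforce
  define t where "t = op_norm k (\<lambda>i j. S i j - Sh i j) / min_eigenvalue k S"
  have t: "0 \<le> t" "t \<le> 1/2"
    using delta_le op_norm_nonneg[OF k] min_eigenvalue_pos[OF k S_sym S_pd]
    unfolding t_def by (auto simp: field_simps)
  have blocks: "\<And>I y. I \<in> \<I> \<Longrightarrow> \<bar>qform I S y - qform I Sh y\<bar> \<le> t * qform I S y"
    unfolding t_def using abs_qform_diff_le[OF _ k S_sym S_pd] I_sub by blast
  have "\<I> \<subseteq> Pow {1..k}"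
    using I_sub by blast
  then have "finite \<I>"
    by (rule finite_subset) simp
  moreover have "finite I0"
    using I_sub I0_in by (auto intro: finite_subset)
  ultimately have classical: "risk \<I> S nstar lamstar \<le> S 1 1 / real n0"
    using I0_in one_in_I0 n0_ge n0_fits star_min unfolding a_def
    by (intro min_risk_le_single_block) auto
  have "risk \<I> S nhat lamhat \<le> risk \<I> S nstar lamstar + 4 * t * risk \<I> S nstar lamstar"
  proof (rule le_add_relative_error[OF abs_risk_diff_le[OF blocks] abs_risk_diff_le[OF blocks] _ t])
    show "risk \<I> Sh nhat lamhat \<le> risk \<I> Sh nstar lamstar"
      using hat_min star_feas star_unb by blast
    show "0 \<le> risk \<I> S nstar lamstar"
      using posdef_qform_nonneg[OF S_pd] I_sub by (intro risk_nonneg) blast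
  qed
  also have "\<dots> \<le> risk \<I> S nstar lamstar + 4 * t * (S 1 1 / real n0)"
    using classical t by (intro add_left_mono mult_left_mono) auto
  finally show ?thesis
    unfolding t_def by simp
qed

end
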